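(* Let $A,B$ be non-empty sets, $I$ a non-empty index set, $\{V_i\}_{i\in I}\subseteq\mathcal R(A)$, $\{W_i\}_{i\in I}\subseteq\mathcal R(B)$, $Z\in\mathcal R(A,B)$, and let $R\in\mathcal R(A,B)$ be a solution to $WL^{2\text{-}3}(A,B,I,V_i,W_i,Z)$. Then (a) $R\circ R^{-1}$ is a solution to $WL^{1\text{-}4}(A,I,V_i,Z\circ Z^{-1})$; (b) $R^{-1}\circ R$ is a solution to $WL^{1\text{-}4}(B,I,W_i,Z^{-1}\circ Z)$.
   Context: $\mathcal L=(L,\wedge,\vee,\otimes,\to,0,1)$ is a complete residuated lattice. For non-empty sets $X,Y$, $\mathcal R(X,Y)$ is the set of fuzzy relations $X\times Y\to L$, $\mathcal R(X)=\mathcal R(X,X)$, ordered pointwise; $R^{-1}(y,x)=R(x,y)$; $(R\circ S)(x,t)=\bigvee_{y}R(x,y)\otimes S(y,t)$. $WL^{2\text{-}3}(A,B,I,V_i,W_i,Z)$ (unknown $U\in\mathcal R(A,B)$): $U^{-1}\circ V_i\le W_i\circ U^{-1}$ and $U\circ W_i\le V_i\circ U$ for all $i\in I$, and $U\le Z$. For a non-empty set $X$, $\{V_i\}\subseteq\mathcal R(X)$, $W\in\mathcal R(X)$, $WL^{1\text{-}4}(X,I,V_i,W)$ (unknown $U\in\mathcal R(X)$): $U\circ V_i\le V_i\circ U$ and $U^{-1}\circ V_i\le V_i\circ U^{-1}$ for all $i\in I$, and $U\le W$, $U^{-1}\le W$. *)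

theory Defs
  imports Main
begin

class complete_residuated_lattice = complete_lattice + comm_monoid_mult +
  fixes residuum :: "'a \<Rightarrow> 'a \<Rightarrow> 'a" (infixr "\<rightharpoonup>" 25)
  assumes one_is_top: "1 = top"
  assumes residuation: "x * y \<le> z \<longleftrightarrow> x \<le> (y \<rightharpoonup> z)"

type_synonym ('a, 'b, 'l) frel = "'a \<Rightarrow> 'b \<Rightarrow> 'l"

definition conv :: "('a, 'b, 'l) frel \<Rightarrow> ('b, 'a, 'l) frel" where
  "conv R = (\<lambda>y x. R x y)"

definition rcomp :: "('a, 'b, 'l::complete_residuated_lattice) frel \<Rightarrow> ('b, 'c, 'l) frel \<Rightarrow> ('a, 'c, 'l) frel"
  (infixl "\<circ>\<^sub>R" 75) where
  "rcomp R S = (\<lambda>x t. SUP y. R x y * S y t)"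

definition WL23 :: "'i set \<Rightarrow> ('i \<Rightarrow> ('a,'a,'l::complete_residuated_lattice) frel)
    \<Rightarrow> ('i \<Rightarrow> ('b,'b,'l) frel) \<Rightarrow> ('a,'b,'l) frel \<Rightarrow> ('a,'b,'l) frel \<Rightarrow> bool" where
  "WL23 I V W Z U \<longleftrightarrow>
     (\<forall>i\<in>I. conv U \<circ>\<^sub>R V i \<le> W i \<circ>\<^sub>R conv U \<and> U \<circ>\<^sub>R W i \<le> V i \<circ>\<^sub>R U) \<and> U \<le> Z"

definition WL14 :: "'i set \<Rightarrow> ('i \<Rightarrow> ('a,'a,'l::complete_residuated_lattice) frel)
    \<Rightarrow> ('a,'a,'l) frel \<Rightarrow> ('a,'a,'l) frel \<Rightarrow> bool" where
  "WL14 I V W U \<longleftrightarrow>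
     (\<forall>i\<in>I. U \<circ>\<^sub>R V i \<le> V i \<circ>\<^sub>R U \<and> conv U \<circ>\<^sub>R V i \<le> V i \<circ>\<^sub>R conv U) \<and> U \<le> W \<and> conv U \<le> W"

end

theory Submission
  imports Defs
begin

text \<open>If \<open>U\<close> intertwines \<open>W\<close> and \<open>V\<close> in both directions, then \<open>U \<circ> U\<inverse>\<close> commutes (in the weak
  sense \<open>\<le>\<close>) with \<open>V\<close>, and it is symmetric. Since \<open>WL23\<close> is invariant under swapping
  \<open>(A, V, Z, R)\<close> with \<open>(B, W, Z\<inverse>, R\<inverse>)\<close>, part (b) is part (a) for the converse problem.
  Associativity of composition rests on \<open>*\<close> distributing over suprema, a consequence
  of residuation.\<close>

lemma mult_right_mono_crl: "(a::'l::complete_residuated_lattice) \<le> b \<Longrightarrow> a * c \<le> b * c"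
  by (meson order_trans residuation order_refl)

lemma mult_mono_crl: "(a::'l::complete_residuated_lattice) \<le> b \<Longrightarrow> c \<le> d \<Longrightarrow> a * c \<le> b * d"
  by (metis mult_right_mono_crl mult.commute order_trans)

lemma SUP_mult_distrib_right: "(SUP y. f y) * (x::'l::complete_residuated_lattice) = (SUP y. f y * x)"
proof (rule antisym)
  have "(SUP y. f y) \<le> (x \<rightharpoonup> (SUP y. f y * x))"
    by (rule SUP_least) (metis residuation SUP_upper UNIV_I)
  then show "(SUP y. f y) * x \<le> (SUP y. f y * x)" using residuation by blast
  show "(SUP y. f y * x) \<le> (SUP y. f y) * x"
    by (rule SUP_least) (simp add: mult_right_mono_crl SUP_upper)
qed

lemma SUP_mult_distrib_left: "(x::'l::complete_residuated_lattice) * (SUP y. f y) = (SUP y. x * f y)"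
  using SUP_mult_distrib_right[of f x] by (simp add: mult.commute)

lemma rcomp_assoc: "(R \<circ>\<^sub>R S) \<circ>\<^sub>R T = R \<circ>\<^sub>R (S \<circ>\<^sub>R T)"
proof -
  have "(SUP z. (SUP y. R x y * S y z) * T z t) = (SUP y. R x y * (SUP z. S y z * T z t))" for x t
  proof -
    have "(SUP z. (SUP y. R x y * S y z) * T z t) = (SUP z. SUP y. R x y * S y z * T z t)"
      by (simp add: SUP_mult_distrib_right)
    also have "\<dots> = (SUP y. SUP z. R x y * S y z * T z t)" by (rule SUP_commute)
    also have "\<dots> = (SUP y. R x y * (SUP z. S y z * T z t))"
      by (simp add: SUP_mult_distrib_left mult.assoc)
    finally show ?thesis .
  qed
  then show ?thesis by (simp add: rcomp_def fun_eq_iff)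
qed

lemma rcomp_mono: "R \<le> R' \<Longrightarrow> S \<le> S' \<Longrightarrow> R \<circ>\<^sub>R S \<le> R' \<circ>\<^sub>R S'"
  unfolding rcomp_def le_fun_def
  by (intro allI SUP_mono) (metis mult_mono_crl UNIV_I order_refl)

lemma conv_rcomp: "conv (R \<circ>\<^sub>R S) = conv S \<circ>\<^sub>R conv R"
  by (simp add: conv_def rcomp_def fun_eq_iff mult.commute)

lemma conv_conv [simp]: "conv (conv R) = R"
  by (simp add: conv_def)

lemma conv_mono: "R \<le> S \<Longrightarrow> conv R \<le> conv S"
  by (simp add: conv_def le_fun_def)

lemma conv_rcomp_conv_self: "conv (R \<circ>\<^sub>R conv R) = R \<circ>\<^sub>R conv R"
  by (simp add: conv_rcomp)

lemma rcomp_conv_self_subcommute: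
  assumes "conv U \<circ>\<^sub>R V \<le> W \<circ>\<^sub>R conv U" and "U \<circ>\<^sub>R W \<le> V \<circ>\<^sub>R U"
  shows "U \<circ>\<^sub>R conv U \<circ>\<^sub>R V \<le> V \<circ>\<^sub>R (U \<circ>\<^sub>R conv U)"
proof -
  have "U \<circ>\<^sub>R conv U \<circ>\<^sub>R V = U \<circ>\<^sub>R (conv U \<circ>\<^sub>R V)" by (simp add: rcomp_assoc)
  also have "\<dots> \<le> U \<circ>\<^sub>R (W \<circ>\<^sub>R conv U)" using assms(1) by (simp add: rcomp_mono)
  also have "\<dots> = (U \<circ>\<^sub>R W) \<circ>\<^sub>R conv U" by (simp add: rcomp_assoc)
  also have "\<dots> \<le> (V \<circ>\<^sub>R U) \<circ>\<^sub>R conv U" using assms(2) by (simp add: rcomp_mono)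
  also have "\<dots> = V \<circ>\<^sub>R (U \<circ>\<^sub>R conv U)" by (simp add: rcomp_assoc)
  finally show ?thesis .
qed

lemma WL23_imp_WL14_rcomp_conv:
  assumes "WL23 I V W Z R"
  shows "WL14 I V (Z \<circ>\<^sub>R conv Z) (R \<circ>\<^sub>R conv R)"
proof -
  have "R \<le> Z" using assms by (simp add: WL23_def)
  then have "R \<circ>\<^sub>R conv R \<le> Z \<circ>\<^sub>R conv Z" by (intro rcomp_mono conv_mono)
  with assms show ?thesis
    unfolding WL14_def conv_rcomp_conv_self by (auto simp: WL23_def rcomp_conv_self_subcommute)
qed

lemma WL23_conv: "WL23 I V W Z R \<Longrightarrow> WL23 I W V (conv Z) (conv R)"
  by (auto simp: WL23_def conv_mono)

theorem proposition7p1: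
  fixes I :: "'i set"
    and V :: "'i \<Rightarrow> ('a, 'a, 'l::complete_residuated_lattice) frel"
    and W :: "'i \<Rightarrow> ('b, 'b, 'l) frel"
    and Z R :: "('a, 'b, 'l) frel"
  assumes "I \<noteq> {}"
    and "WL23 I V W Z R"
  shows "WL14 I V (Z \<circ>\<^sub>R conv Z) (R \<circ>\<^sub>R conv R) \<and>
         WL14 I W (conv Z \<circ>\<^sub>R Z) (conv R \<circ>\<^sub>R R)"
  using WL23_imp_WL14_rcomp_conv[OF assms(2)]
    WL23_imp_WL14_rcomp_conv[OF WL23_conv[OF assms(2)]]
  by simp

end
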